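(* Let $V$ be countably infinite, $\psi:K_V\to\mathbb N$ a fixed bijection, $G_0\in\mathscr{G}_0(V)\cup\mathscr{G}_1(V)$, $\varphi\in\ell^1_+(K_V)$, and $f(G):=d_\varphi(G_0,G)$. The following are equivalent: (1) the limit $c_\varphi := \lim_{n\to\infty}2^n\varphi(\psi^{-1}(n))$ exists; (2) $f'(G)$ exists for some $G\in\mathscr{G}(V)\setminus\{\emptyset,K_V\}$ with $G\Delta G_0\in\mathscr{G}_0(V)\cup\mathscr{G}_1(V)$. In this case $f'(G)$ exists for every $G\in\mathscr{G}(V)\setminus\{\emptyset,K_V\}$ with $G\Delta G_0\in\mathscr{G}_0(V)\cup\mathscr{G}_1(V)$, and $f'(G) = c_\varphi$ if $G, G\Delta G_0$ both lie in $\mathscr{G}_0(V)$ or both lie in $\mathscr{G}_1(V)$, while $f'(G) = -c_\varphi$ if $(G, G\Delta G_0)\in\mathscr{G}_i(V)\times\mathscr{G}_{1-i}(V)$ for some $i\in\{0,1\}$.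
   Context: $K_V$ is the set of $2$-element subsets of $V$; $\mathscr{G}(V)$ is the set of simple graphs on $V$ identified with their edge sets, with the product topology of $\{0,1\}^{K_V}$; $\mathscr{G}_0(V)$, $\mathscr{G}_1(V)$ are the graphs with finitely, resp. co-finitely, many edges; $\mathscr{G}'(V):=\mathscr{G}(V)\setminus(\mathscr{G}_0(V)\cup\mathscr{G}_1(V))$. $\ell^1_+(K_V)$ is the set of $\varphi:K_V\to(0,\infty)$ with $\sum_e\varphi(e)<\infty$, and $d_\varphi(G_1,G_2):=\sum_{e\in G_1\Delta G_2}\varphi(e)$. $\mathbb N=\{1,2,\dots\}$, $\|G\|_{\psi,2}:=\sum_{e\in G}2^{-\psi(e)}$. For $f:\mathscr{G}(V)\to\mathbb R$ and $G\ne\emptyset,K_V$, $f'(G) := \lim_{G_1\to G,\ G_1\in\mathscr{G}'(V)\setminus\{G\}} \frac{f(G_1)-f(G)}{\|G_1\|_{\psi,2}-\|G\|_{\psi,2}}$ (limit in the product topology) if it exists. *)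

theory Defs
  imports "HOL-Analysis.Analysis"
begin

definition KV :: "'v set set" where
  "KV = {e. card e = 2}"

text \<open>Simple graphs on V, identified with their edge sets.\<close>
definition graphs :: "'v set set set" where
  "graphs = Pow KV"

definition graphs0 :: "'v set set set" where
  "graphs0 = {G. G \<subseteq> KV \<and> finite G}"

definition graphs1 :: "'v set set set" where
  "graphs1 = {G. G \<subseteq> KV \<and> finite (KV - G)}"

definition graphs' :: "'v set set set" where
  "graphs' = graphs - (graphs0 \<union> graphs1)"

definition symdiff :: "'a set \<Rightarrow> 'a set \<Rightarrow> 'a set" where
  "symdiff A B = (A - B) \<union> (B - A)"

definition l1_pos :: "('v set \<Rightarrow> real) \<Rightarrow> bool" where
  "l1_pos \<phi> \<longleftrightarrow> (\<forall>e\<in>KV. \<phi> e > 0) \<and> \<phi> summable_on KV"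

definition d_phi :: "('v set \<Rightarrow> real) \<Rightarrow> 'v set set \<Rightarrow> 'v set set \<Rightarrow> real" where
  "d_phi \<phi> G1 G2 = (\<Sum>\<^sub>\<infinity>e\<in>symdiff G1 G2. \<phi> e)"

definition norm_psi2 :: "('v set \<Rightarrow> nat) \<Rightarrow> 'v set set \<Rightarrow> real" where
  "norm_psi2 \<psi> G = (\<Sum>\<^sub>\<infinity>e\<in>G. (1/2::real) ^ \<psi> e)"

text \<open>Neighbourhood filter of a graph G in the product topology of \<open>{0,1}^{K_V}\<close>:
  basic neighbourhoods are the graphs agreeing with G on a finite set of pairs.\<close>
definition graph_nhds :: "'v set set \<Rightarrow> 'v set set filter" where
  "graph_nhds G = (INF F\<in>{F. finite F \<and> F \<subseteq> KV}.
      principal {H\<in>graphs. H \<inter> F = G \<inter> F})"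

definition has_graph_deriv ::
  "('v set \<Rightarrow> nat) \<Rightarrow> ('v set set \<Rightarrow> real) \<Rightarrow> 'v set set \<Rightarrow> real \<Rightarrow> bool" where
  "has_graph_deriv \<psi> f G L \<longleftrightarrow>
     ((\<lambda>G1. (f G1 - f G) / (norm_psi2 \<psi> G1 - norm_psi2 \<psi> G)) \<longlongrightarrow> L)
       (inf (graph_nhds G) (principal (graphs' - {G})))"

end

theory Submission
  imports Defs
begin

text \<open>
  Write a graph near \<open>G\<close> as \<open>G \<Delta> D\<close>, where \<open>D\<close> avoids a prescribed finite set of
  pairs. Since \<open>G\<close> and \<open>G \<Delta> G0\<close> are finite or cofinite, for such \<open>D\<close> the values of
  \<open>d_\<phi>(G0, -)\<close> and of \<open>\<parallel>-\<parallel>_{\<psi>,2}\<close> change by \<open>\<plusminus>\<Sum>_D \<phi>\<close> and \<open>\<plusminus>\<Sum>_D 2^-\<psi>\<close>, so the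
  difference quotient is, up to sign, the mean of the numbers \<open>2^\<psi>(e) \<phi>(e)\<close> over
  \<open>e \<in> D\<close>, weighted by \<open>2^-\<psi>(e)\<close>. If these numbers converge to \<open>c\<close>, all such means
  over pairs of large index are close to \<open>c\<close>. Conversely, for \<open>n = \<psi>(e)\<close> let \<open>D\<close> consist
  of the pairs of even index beyond \<open>n\<close> (the pairs of odd index keep \<open>G \<Delta> D\<close> in
  \<open>\<G>'(V)\<close>); comparing the means over \<open>D\<close> and over \<open>D \<union> {e}\<close> isolates \<open>2^n \<phi>(e)\<close>,
  because \<open>\<Sum>_D 2^-\<psi> \<le> 2^-n\<close>.
\<close>

section \<open>Neighbourhoods in the product topology\<close>

lemma eventually_graph_nhds:
  "eventually P (graph_nhds G) \<longleftrightarrow>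
     (\<exists>F. finite F \<and> F \<subseteq> KV \<and> (\<forall>H\<in>graphs. H \<inter> F = G \<inter> F \<longrightarrow> P H))"
  unfolding graph_nhds_def
proof (subst eventually_INF_base)
  show "{F. finite F \<and> F \<subseteq> KV} \<noteq> {}" by blast
  show "\<exists>F\<in>{F. finite F \<and> F \<subseteq> KV}. principal {H \<in> graphs. H \<inter> F = G \<inter> F} \<le>
      inf (principal {H \<in> graphs. H \<inter> A = G \<inter> A}) (principal {H \<in> graphs. H \<inter> B = G \<inter> B})"
    if "A \<in> {F. finite F \<and> F \<subseteq> KV}" "B \<in> {F. finite F \<and> F \<subseteq> KV}" for A B
    using that by (intro bexI[of _ "A \<union> B"]) auto
qed (auto simp: eventually_principal)

lemma eventually_graph_nhds_symdiff:
  assumes "G \<subseteq> KV"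
  shows "eventually P (graph_nhds G) \<longleftrightarrow>
     (\<exists>F. finite F \<and> F \<subseteq> KV \<and> (\<forall>D. D \<subseteq> KV \<and> D \<inter> F = {} \<longrightarrow> P (symdiff G D)))"
proof -
  have "(\<forall>H\<in>graphs. H \<inter> F = G \<inter> F \<longrightarrow> P H) \<longleftrightarrow> (\<forall>D. D \<subseteq> KV \<and> D \<inter> F = {} \<longrightarrow> P (symdiff G D))"
    for F
  proof (intro iffI allI ballI impI)
    fix D assume "\<forall>H\<in>graphs. H \<inter> F = G \<inter> F \<longrightarrow> P H" "D \<subseteq> KV \<and> D \<inter> F = {}"
    moreover have "symdiff G D \<in> graphs" "symdiff G D \<inter> F = G \<inter> F"
      using assms \<open>D \<subseteq> KV \<and> D \<inter> F = {}\<close> unfolding graphs_def symdiff_def by auto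
    ultimately show "P (symdiff G D)" by blast
  next
    fix H assume P: "\<forall>D. D \<subseteq> KV \<and> D \<inter> F = {} \<longrightarrow> P (symdiff G D)"
      and H: "H \<in> graphs" "H \<inter> F = G \<inter> F"
    have "symdiff H G \<subseteq> KV \<and> symdiff H G \<inter> F = {}"
      using assms H unfolding graphs_def symdiff_def by auto
    with P have "P (symdiff G (symdiff H G))" by blast
    moreover have "symdiff G (symdiff H G) = H" unfolding symdiff_def by blast
    ultimately show "P H" by simp
  qed
  then show ?thesis unfolding eventually_graph_nhds by simp
qed

section \<open>Finite and cofinite graphs\<close>

definition exceptional_edges :: "'v set set \<Rightarrow> 'v set set" where
  "exceptional_edges G = (if finite G then G else KV - G)"

lemma graphs01_iff: "G \<in> graphs0 \<union> graphs1 \<longleftrightarrow> G \<subseteq> KV \<and> finite (exceptional_edges G)"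
  by (auto simp: graphs0_def graphs1_def exceptional_edges_def split: if_splits)

lemma symdiff_graphs01:
  assumes "X \<in> graphs0 \<union> graphs1" "Y \<in> graphs0 \<union> graphs1"
  shows "symdiff X Y \<in> graphs0 \<union> graphs1"
proof -
  have XY: "X \<subseteq> KV" "Y \<subseteq> KV" and fin: "finite (exceptional_edges X \<union> exceptional_edges Y)"
    using assms unfolding graphs01_iff by auto
  have "symdiff X Y \<subseteq> exceptional_edges X \<union> exceptional_edges Y \<or>
        KV - symdiff X Y \<subseteq> exceptional_edges X \<union> exceptional_edges Y"
    using XY unfolding exceptional_edges_def symdiff_def by (cases "finite X"; cases "finite Y") auto
  then have "finite (symdiff X Y) \<or> finite (KV - symdiff X Y)"
    using fin finite_subset by blast
  then show ?thesis
    using XY unfolding graphs0_def graphs1_def symdiff_def by auto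
qed

lemma graphs01_of_symdiff:
  assumes "symdiff G G0 \<in> graphs0 \<union> graphs1" "G0 \<in> graphs0 \<union> graphs1"
  shows "G \<in> graphs0 \<union> graphs1"
proof -
  have "G = symdiff (symdiff G G0) G0" unfolding symdiff_def by blast
  then show ?thesis using symdiff_graphs01[OF assms] by simp
qed

lemma symdiff_in_graphs':
  assumes G: "G \<in> graphs0 \<union> graphs1"
    and sub: "D \<subseteq> KV" "D' \<subseteq> KV"
    and disj: "D \<inter> exceptional_edges G = {}" "D' \<inter> exceptional_edges G = {}" "D \<inter> D' = {}"
    and inf: "infinite D" "infinite D'"
  shows "symdiff G D \<in> graphs' - {G}"
proof -
  have "G \<subseteq> KV" using G unfolding graphs01_iff by simp
  then have "symdiff G D \<subseteq> KV" using sub(1) unfolding symdiff_def by blast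
  moreover have "D \<subseteq> symdiff G D \<and> D' \<subseteq> KV - symdiff G D \<or> D' \<subseteq> symdiff G D \<and> D \<subseteq> KV - symdiff G D"
  proof (cases "finite G")
    case True
    then have "G \<inter> D = {}" "G \<inter> D' = {}" using disj(1,2) unfolding exceptional_edges_def by auto
    then show ?thesis using sub disj(3) unfolding symdiff_def by blast
  next
    case False
    then have "D \<subseteq> G" "D' \<subseteq> G" using sub disj(1,2) unfolding exceptional_edges_def by auto
    then show ?thesis using sub disj(3) unfolding symdiff_def by blast
  qed
  then have "infinite (symdiff G D)" "infinite (KV - symdiff G D)"
    using inf by (meson finite_subset)+
  ultimately have "symdiff G D \<in> graphs'" unfolding graphs'_def graphs_def graphs0_def graphs1_def by auto
  moreover have "symdiff G D \<noteq> G"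
  proof
    assume "symdiff G D = G"
    then have "D = {}" unfolding symdiff_def by blast
    then show False using inf(1) by simp
  qed
  ultimately show ?thesis by blast
qed

lemma exists_nontrivial_graph_symdiff_graphs01:
  assumes "infinite (KV :: 'v set set)" "G0 \<in> graphs0 \<union> graphs1"
  obtains G :: "'v set set" where "G \<in> graphs - {{}, KV}" "symdiff G G0 \<in> graphs0 \<union> graphs1"
proof -
  obtain e :: "'v set" where "e \<in> KV" using infinite_imp_nonempty[OF assms(1)] by blast
  moreover have "{e} \<noteq> KV" using assms(1) by (metis finite.emptyI finite_insert)
  ultimately have "{e} \<in> graphs - {{}, KV}" "{e} \<in> graphs0 \<union> graphs1"
    by (auto simp: graphs_def graphs0_def)
  then show thesis using that symdiff_graphs01[OF _ assms(2)] by blast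
qed

definition finite_sign :: "'a set \<Rightarrow> real" where
  "finite_sign A = (if finite A then 1 else -1)"

lemma abs_finite_sign [simp]: "\<bar>finite_sign A\<bar> = 1"
  by (simp add: finite_sign_def)

lemma finite_sign_mult_cancel [simp]:
  "finite_sign A * finite_sign B * (finite_sign A * finite_sign B * x) = x"
  by (simp add: finite_sign_def)

lemma abs_finite_sign_mult_diff:
  "\<bar>finite_sign A * finite_sign B * r - x\<bar> = \<bar>r - finite_sign A * finite_sign B * x\<bar>"
proof -
  let ?s = "finite_sign A * finite_sign B"
  have "?s * r - x = ?s * (r - ?s * x)" by (simp add: right_diff_distrib)
  then show ?thesis by (simp add: abs_mult)
qed

lemma finite_sign_graphs0: "G \<in> graphs0 \<Longrightarrow> finite_sign G = 1"
  by (simp add: finite_sign_def graphs0_def)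

lemma finite_sign_graphs1:
  fixes G :: "'v set set"
  assumes "infinite (KV :: 'v set set)" "G \<in> graphs1"
  shows "finite_sign G = -1"
proof -
  have "KV = G \<union> (KV - G)" "finite (KV - G)" using assms(2) by (auto simp: graphs1_def)
  then have "infinite G" using assms(1) by (metis finite_UnI)
  then show ?thesis by (simp add: finite_sign_def)
qed

lemma finite_sign_mult_same_type:
  fixes A B :: "'v set set"
  assumes "infinite (KV :: 'v set set)"
    and "(A \<in> graphs0 \<and> B \<in> graphs0) \<or> (A \<in> graphs1 \<and> B \<in> graphs1)"
  shows "finite_sign B * finite_sign A = 1"
  using assms(2) by (auto simp: finite_sign_graphs0 finite_sign_graphs1[OF assms(1)])

lemma finite_sign_mult_opposite_type:
  fixes A B :: "'v set set"
  assumes "infinite (KV :: 'v set set)"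
    and "(A \<in> graphs0 \<and> B \<in> graphs1) \<or> (A \<in> graphs1 \<and> B \<in> graphs0)"
  shows "finite_sign B * finite_sign A = -1"
  using assms(2) by (auto simp: finite_sign_graphs0 finite_sign_graphs1[OF assms(1)])

lemma infsum_symdiff_exceptional:
  fixes g :: "'v set \<Rightarrow> real"
  assumes g: "g summable_on KV" and X: "X \<in> graphs0 \<union> graphs1"
    and D: "D \<subseteq> KV" "D \<inter> exceptional_edges X = {}"
  shows "infsum g (symdiff X D) = infsum g X + finite_sign X * infsum g D"
proof -
  have XD: "g summable_on X" "g summable_on D"
    using X D(1) unfolding graphs01_iff by (auto intro: summable_on_subset[OF g])
  show ?thesis
  proof (cases "finite X")
    case True
    then have "symdiff X D = X \<union> D" "X \<inter> D = {}"
      using D(2) unfolding symdiff_def exceptional_edges_def by auto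
    then show ?thesis using True XD by (simp add: infsum_Un_disjoint finite_sign_def)
  next
    case False
    then have "symdiff X D = X - D" "D \<subseteq> X"
      using D unfolding symdiff_def exceptional_edges_def by auto
    then show ?thesis using False XD by (simp add: infsum_Diff finite_sign_def)
  qed
qed

section \<open>Weighted means of \<open>2^\<psi>(e) \<phi>(e)\<close>\<close>

lemma ratio_close_of_increment:
  fixes a u P W L t :: real
  assumes "\<bar>P / W - L\<bar> < t" "\<bar>(a + P) / (u + W) - L\<bar> < t" "0 < W" "W \<le> u"
  shows "\<bar>a / u - L\<bar> < 3 * t"
proof -
  have u: "u > 0" using assms(3,4) by linarith
  have "P / W - L = (P - L * W) / W" "(a + P) / (u + W) - L = (a + P - L * (u + W)) / (u + W)"
    using assms(3) u by (simp_all add: field_simps)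
  then have small: "\<bar>P - L * W\<bar> < t * W" "\<bar>a + P - L * (u + W)\<bar> < t * (u + W)"
    using assms(1,2,3) u by (simp_all add: abs_divide divide_less_eq)
  have "0 < t * W" using small(1) by (meson abs_ge_zero le_less_trans)
  then have "t * W \<le> t * u" using assms(3,4) by (simp add: zero_less_mult_iff)
  moreover have "\<bar>a - L * u\<bar> \<le> \<bar>a + P - L * (u + W)\<bar> + \<bar>P - L * W\<bar>"
    using abs_triangle_ineq4[of "a + P - L * (u + W)" "P - L * W"] by (simp add: algebra_simps)
  ultimately have "\<bar>a - L * u\<bar> < 3 * t * u" using small by (simp add: algebra_simps)
  moreover have "a / u - L = (a - L * u) / u" using u by (simp add: field_simps)
  ultimately show ?thesis using u by (simp add: abs_divide divide_less_eq)
qed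

lemma infsum_ratio_close:
  fixes g w :: "'a \<Rightarrow> real"
  assumes "g summable_on D" "w summable_on D" "infsum w D > 0"
    and close: "\<And>e. e \<in> D \<Longrightarrow> \<bar>g e - c * w e\<bar> \<le> r * w e"
  shows "\<bar>infsum g D / infsum w D - c\<bar> \<le> r"
proof -
  have "((\<lambda>e. g e + (- c) * w e) has_sum (infsum g D + (- c) * infsum w D)) D"
    using assms(1,2) by (intro has_sum_add has_sum_cmult_right) auto
  moreover have "((\<lambda>e. r * w e) has_sum (r * infsum w D)) D"
    using assms(2) by (intro has_sum_cmult_right) auto
  ultimately have "\<bar>infsum g D - c * infsum w D\<bar> \<le> r * infsum w D"
    using norm_infsum_le[of "\<lambda>e. g e + (- c) * w e" D _ "\<lambda>e. r * w e"] close by simp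
  then show ?thesis using assms(3) by (simp add: divide_diff_eq_iff abs_divide divide_le_eq)
qed

lemma has_sum_power_half_tail: "((\<lambda>m. (1/2::real) ^ m) has_sum (1/2) ^ n) {n<..}"
proof -
  have "((\<lambda>j. (1/2::real) ^ j * (1/2) ^ n) has_sum (1 * (1/2) ^ n)) {1..}"
    using has_sum_cmult_left[OF has_sum_geometric_from_1[of "1/2::real"]] by simp
  then have "((\<lambda>j. (1/2::real) ^ (j + n)) has_sum (1/2) ^ n) {1..}"
    by (simp add: power_add)
  then show ?thesis
    by (rule has_sum_reindex_bij_witness[of _ "\<lambda>m. m - n" "\<lambda>j. j + n", THEN iffD1, rotated -1]) auto
qed

lemma l1_pos_imp_summable: "l1_pos \<phi> \<Longrightarrow> \<phi> summable_on KV"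
  by (simp add: l1_pos_def)

abbreviation pair_weight :: "('v set \<Rightarrow> nat) \<Rightarrow> 'v set \<Rightarrow> real" where
  "pair_weight \<psi> e \<equiv> (1/2) ^ \<psi> e"

context
  fixes \<psi> :: "'v set \<Rightarrow> nat"
  assumes bij: "bij_betw \<psi> KV {1..}"
begin

lemma infinite_KV: "infinite (KV :: 'v set set)"
  using bij_betw_finite[OF bij] infinite_Ici[where a="1::nat"] by blast

lemma bij_betw_index_set: "M \<subseteq> {1..} \<Longrightarrow> bij_betw \<psi> {e\<in>KV. \<psi> e \<in> M} M"
  by (rule bij_betw_subset[OF bij]) (use bij in \<open>auto simp: bij_betw_def\<close>)

lemma finite_index_below: "finite {e\<in>KV. \<psi> e < N}"
proof (rule finite_imageD)
  show "finite (\<psi> ` {e\<in>KV. \<psi> e < N})" by (rule finite_subset[of _ "{..<N}"]) auto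
  show "inj_on \<psi> {e\<in>KV. \<psi> e < N}"
    using bij_betw_imp_inj_on[OF bij] by (rule inj_on_subset) auto
qed

lemma disjoint_infinite_index_sets_above:
  obtains Ev Od where "Ev \<subseteq> {e\<in>KV. n < \<psi> e}" "Od \<subseteq> {e\<in>KV. n < \<psi> e}" "Ev \<inter> Od = {}"
    "infinite Ev" "infinite Od"
proof
  let ?Ev = "{m. n < m \<and> even m}" and ?Od = "{m. n < m \<and> odd m}"
  have "infinite ?Ev" unfolding infinite_nat_iff_unbounded
  proof
    fix m show "\<exists>k>m. k \<in> ?Ev" by (rule exI[of _ "2 * (m + n + 1)"]) auto
  qed
  moreover have "infinite ?Od" unfolding infinite_nat_iff_unbounded
  proof
    fix m show "\<exists>k>m. k \<in> ?Od" by (rule exI[of _ "2 * (m + n) + 1"]) auto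
  qed
  moreover have "?Ev \<subseteq> {1..}" "?Od \<subseteq> {1..}" by auto
  ultimately show "infinite {e\<in>KV. \<psi> e \<in> ?Ev}" "infinite {e\<in>KV. \<psi> e \<in> ?Od}"
    using bij_betw_finite[OF bij_betw_index_set] by blast+
qed auto

lemma pair_weight_summable: "pair_weight \<psi> summable_on KV"
  using summable_on_reindex_bij_betw[OF bij, where f="\<lambda>m. (1/2::real) ^ m"]
    has_sum_geometric_from_1[of "1/2::real"] by (auto simp: summable_on_def)

lemma pair_weight_infsum_pos:
  assumes "D \<subseteq> KV" "e \<in> D"
  shows "infsum (pair_weight \<psi>) D > 0"
proof -
  have "infsum (pair_weight \<psi>) {e} \<le> infsum (pair_weight \<psi>) D"
    by (rule infsum_mono_neutral)
      (use assms summable_on_subset[OF pair_weight_summable assms(1)] in auto)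
  moreover have "infsum (pair_weight \<psi>) {e} > 0" by simp
  ultimately show ?thesis by linarith
qed

lemma pair_weight_infsum_above:
  assumes "D \<subseteq> {e\<in>KV. n < \<psi> e}"
  shows "infsum (pair_weight \<psi>) D \<le> (1/2) ^ n"
proof -
  have "bij_betw \<psi> {e\<in>KV. \<psi> e \<in> {n<..}} {n<..}" by (rule bij_betw_index_set) auto
  then have tail: "(pair_weight \<psi> has_sum (1/2) ^ n) {e\<in>KV. \<psi> e \<in> {n<..}}"
    using has_sum_power_half_tail[of n] by (simp add: has_sum_reindex_bij_betw)
  moreover have "pair_weight \<psi> summable_on D"
    using assms by (auto intro: summable_on_subset[OF pair_weight_summable])
  ultimately have "infsum (pair_weight \<psi>) D \<le> infsum (pair_weight \<psi>) {e\<in>KV. \<psi> e \<in> {n<..}}"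
    using assms by (intro infsum_mono_neutral) (auto simp: summable_on_def)
  also have "\<dots> = (1/2) ^ n" using tail by (rule infsumI)
  finally show ?thesis .
qed

section \<open>Difference quotients of \<open>d_\<phi>(G0, -)\<close>\<close>

context
  fixes \<phi> :: "'v set \<Rightarrow> real"
  assumes l1: "l1_pos \<phi>"
begin

lemma difference_quotient_symdiff:
  assumes G: "G \<in> graphs0 \<union> graphs1" and A: "symdiff G G0 \<in> graphs0 \<union> graphs1"
    and D: "D \<subseteq> KV" "D \<inter> exceptional_edges G = {}" "D \<inter> exceptional_edges (symdiff G G0) = {}"
  shows "(d_phi \<phi> G0 (symdiff G D) - d_phi \<phi> G0 G) / (norm_psi2 \<psi> (symdiff G D) - norm_psi2 \<psi> G)
     = finite_sign (symdiff G G0) * finite_sign G * (infsum \<phi> D / infsum (pair_weight \<psi>) D)"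
proof -
  have "symdiff G0 (symdiff G D) = symdiff (symdiff G G0) D" "symdiff G0 G = symdiff G G0"
    unfolding symdiff_def by blast+
  then have "d_phi \<phi> G0 (symdiff G D) - d_phi \<phi> G0 G = finite_sign (symdiff G G0) * infsum \<phi> D"
    unfolding d_phi_def using infsum_symdiff_exceptional[OF l1_pos_imp_summable[OF l1] A D(1,3)] by simp
  moreover have "norm_psi2 \<psi> (symdiff G D) - norm_psi2 \<psi> G = finite_sign G * infsum (pair_weight \<psi>) D"
    unfolding norm_psi2_def using infsum_symdiff_exceptional[OF pair_weight_summable G D(1,2)] by simp
  ultimately show ?thesis by (simp add: finite_sign_def)
qed

lemma infsum_ratio_close_of_limit:
  assumes lim: "(\<lambda>n. 2 ^ n * \<phi> (the_inv_into KV \<psi> n)) \<longlonglongrightarrow> c" and "\<epsilon> > 0"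
  obtains N where "\<And>D. D \<subseteq> {e\<in>KV. N \<le> \<psi> e} \<Longrightarrow> D \<noteq> {} \<Longrightarrow>
    \<bar>infsum \<phi> D / infsum (pair_weight \<psi>) D - c\<bar> \<le> \<epsilon>"
proof -
  obtain N where N: "\<And>n. N \<le> n \<Longrightarrow> \<bar>2 ^ n * \<phi> (the_inv_into KV \<psi> n) - c\<bar> < \<epsilon>"
    using LIMSEQ_D[OF lim \<open>\<epsilon> > 0\<close>] by auto
  show thesis
  proof (rule that)
    fix D assume D: "D \<subseteq> {e\<in>KV. N \<le> \<psi> e}" "D \<noteq> {}"
    then obtain e0 where "e0 \<in> D" by blast
    show "\<bar>infsum \<phi> D / infsum (pair_weight \<psi>) D - c\<bar> \<le> \<epsilon>"
    proof (rule infsum_ratio_close)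
      show "\<phi> summable_on D" "pair_weight \<psi> summable_on D"
        using D(1) by (auto intro: summable_on_subset l1_pos_imp_summable[OF l1] pair_weight_summable)
      show "infsum (pair_weight \<psi>) D > 0" using D(1) \<open>e0 \<in> D\<close> by (intro pair_weight_infsum_pos) auto
    next
      fix e assume "e \<in> D"
      then have "e \<in> KV" "N \<le> \<psi> e" using D by auto
      then have "\<bar>2 ^ \<psi> e * \<phi> e - c\<bar> \<le> \<epsilon>"
        using N[of "\<psi> e"] the_inv_into_f_f[OF bij_betw_imp_inj_on[OF bij]] by force
      moreover have "\<phi> e - c * pair_weight \<psi> e = pair_weight \<psi> e * (2 ^ \<psi> e * \<phi> e - c)"
        by (simp add: algebra_simps power_one_over)
      ultimately show "\<bar>\<phi> e - c * pair_weight \<psi> e\<bar> \<le> \<epsilon> * pair_weight \<psi> e"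
        by (simp add: abs_mult mult.commute mult_left_mono)
    qed
  qed
qed

lemma has_graph_deriv_of_limit:
  assumes lim: "(\<lambda>n. 2 ^ n * \<phi> (the_inv_into KV \<psi> n)) \<longlonglongrightarrow> c"
    and G: "G \<in> graphs0 \<union> graphs1" and A: "symdiff G G0 \<in> graphs0 \<union> graphs1"
  shows "has_graph_deriv \<psi> (d_phi \<phi> G0) G (finite_sign (symdiff G G0) * finite_sign G * c)"
  unfolding has_graph_deriv_def
proof (rule tendstoI)
  fix \<epsilon> :: real assume "\<epsilon> > 0"
  then have "\<epsilon> / 2 > 0" by simp
  obtain N where close: "\<And>D. D \<subseteq> {e\<in>KV. N \<le> \<psi> e} \<Longrightarrow> D \<noteq> {} \<Longrightarrow>
      \<bar>infsum \<phi> D / infsum (pair_weight \<psi>) D - c\<bar> \<le> \<epsilon> / 2"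
    using infsum_ratio_close_of_limit[OF lim \<open>\<epsilon> / 2 > 0\<close>] by blast
  define F where "F = {e\<in>KV. \<psi> e < N} \<union> exceptional_edges G \<union> exceptional_edges (symdiff G G0)"
  have F: "finite F" "F \<subseteq> KV"
    using finite_index_below G A unfolding F_def graphs01_iff exceptional_edges_def by auto
  define s where "s = finite_sign (symdiff G G0) * finite_sign G"
  let ?q = "\<lambda>H. (d_phi \<phi> G0 H - d_phi \<phi> G0 G) / (norm_psi2 \<psi> H - norm_psi2 \<psi> G)"
  have "\<forall>D. D \<subseteq> KV \<and> D \<inter> F = {} \<longrightarrow>
      symdiff G D \<in> graphs' - {G} \<longrightarrow> dist (?q (symdiff G D)) (s * c) < \<epsilon>"
  proof (intro allI impI)
    fix D assume D: "D \<subseteq> KV \<and> D \<inter> F = {}" "symdiff G D \<in> graphs' - {G}"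
    define r where "r = infsum \<phi> D / infsum (pair_weight \<psi>) D"
    have "D \<noteq> {}" using D(2) unfolding symdiff_def by auto
    moreover have "D \<subseteq> {e\<in>KV. N \<le> \<psi> e}" using D(1) unfolding F_def by auto
    ultimately have "\<bar>r - c\<bar> \<le> \<epsilon> / 2" unfolding r_def by (intro close)
    moreover have "?q (symdiff G D) = s * r"
      unfolding s_def r_def using D(1) by (intro difference_quotient_symdiff[OF G A]) (auto simp: F_def)
    moreover have "\<bar>s\<bar> = 1" by (simp add: s_def abs_mult)
    ultimately show "dist (?q (symdiff G D)) (s * c) < \<epsilon>"
      using \<open>\<epsilon> > 0\<close> by (simp add: dist_real_def abs_mult flip: right_diff_distrib)
  qed
  moreover have "G \<subseteq> KV" using G unfolding graphs01_iff by simp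
  ultimately have "eventually (\<lambda>H. H \<in> graphs' - {G} \<longrightarrow> dist (?q H) (s * c) < \<epsilon>) (graph_nhds G)"
    unfolding eventually_graph_nhds_symdiff[OF \<open>G \<subseteq> KV\<close>] using F by blast
  then show "eventually (\<lambda>H. dist (?q H) (s * c) < \<epsilon>) (inf (graph_nhds G) (principal (graphs' - {G})))"
    unfolding eventually_inf_principal .
qed

lemma infsum_ratio_close_of_has_graph_deriv:
  assumes G: "G \<in> graphs0 \<union> graphs1" and A: "symdiff G G0 \<in> graphs0 \<union> graphs1"
    and der: "has_graph_deriv \<psi> (d_phi \<phi> G0) G L" and "\<epsilon> > 0"
  obtains N where "\<And>D D'. D \<subseteq> {e\<in>KV. N \<le> \<psi> e} \<Longrightarrow> D' \<subseteq> {e\<in>KV. N \<le> \<psi> e} \<Longrightarrow>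
      D \<inter> D' = {} \<Longrightarrow> infinite D \<Longrightarrow> infinite D' \<Longrightarrow>
      \<bar>infsum \<phi> D / infsum (pair_weight \<psi>) D - finite_sign (symdiff G G0) * finite_sign G * L\<bar> < \<epsilon>"
proof -
  let ?q = "\<lambda>H. (d_phi \<phi> G0 H - d_phi \<phi> G0 G) / (norm_psi2 \<psi> H - norm_psi2 \<psi> G)"
  have "G \<subseteq> KV" using G unfolding graphs01_iff by simp
  have "eventually (\<lambda>H. H \<in> graphs' - {G} \<longrightarrow> dist (?q H) L < \<epsilon>) (graph_nhds G)"
    using tendstoD[OF der[unfolded has_graph_deriv_def] \<open>\<epsilon> > 0\<close>]
    unfolding eventually_inf_principal .
  then obtain F where F: "finite F" "\<forall>D. D \<subseteq> KV \<and> D \<inter> F = {} \<longrightarrow>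
      symdiff G D \<in> graphs' - {G} \<longrightarrow> dist (?q (symdiff G D)) L < \<epsilon>"
    unfolding eventually_graph_nhds_symdiff[OF \<open>G \<subseteq> KV\<close>] by blast
  define F' where "F' = F \<union> exceptional_edges G \<union> exceptional_edges (symdiff G G0)"
  have "finite (\<psi> ` F')" using F(1) G A unfolding F'_def graphs01_iff by auto
  then obtain N where N: "\<psi> ` F' \<subseteq> {..<N}" using finite_nat_bounded by blast
  show thesis
  proof (rule that)
    fix D D' assume D: "D \<subseteq> {e\<in>KV. N \<le> \<psi> e}" "D' \<subseteq> {e\<in>KV. N \<le> \<psi> e}"
      "D \<inter> D' = {}" "infinite D" "infinite D'"
    then have disj: "D \<inter> F' = {}" "D' \<inter> F' = {}" using N by fastforce+
    define r where "r = infsum \<phi> D / infsum (pair_weight \<psi>) D"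
    have "symdiff G D \<in> graphs' - {G}"
      by (rule symdiff_in_graphs'[OF G _ _ _ _ D(3-5)]) (use D(1,2) disj in \<open>auto simp: F'_def\<close>)
    moreover have "D \<subseteq> KV \<and> D \<inter> F = {}" using D(1) disj(1) unfolding F'_def by auto
    ultimately have "dist (?q (symdiff G D)) L < \<epsilon>" using F(2) by simp
    moreover have "?q (symdiff G D) = finite_sign (symdiff G G0) * finite_sign G * r"
      unfolding r_def using D(1) disj(1)
      by (intro difference_quotient_symdiff[OF G A]) (auto simp: F'_def)
    ultimately have "\<bar>finite_sign (symdiff G G0) * finite_sign G * r - L\<bar> < \<epsilon>"
      by (simp add: dist_real_def)
    then show "\<bar>infsum \<phi> D / infsum (pair_weight \<psi>) D - finite_sign (symdiff G G0) * finite_sign G * L\<bar> < \<epsilon>"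
      unfolding abs_finite_sign_mult_diff r_def .
  qed
qed

lemma term_close_of_infsum_ratios_close:
  assumes close: "\<And>D D'. D \<subseteq> {e\<in>KV. N \<le> \<psi> e} \<Longrightarrow> D' \<subseteq> {e\<in>KV. N \<le> \<psi> e} \<Longrightarrow>
      D \<inter> D' = {} \<Longrightarrow> infinite D \<Longrightarrow> infinite D' \<Longrightarrow>
      \<bar>infsum \<phi> D / infsum (pair_weight \<psi>) D - x\<bar> < t"
    and n: "max N 1 \<le> n"
  shows "\<bar>2 ^ n * \<phi> (the_inv_into KV \<psi> n) - x\<bar> < 3 * t"
proof -
  let ?w = "pair_weight \<psi>"
  define e where "e = the_inv_into KV \<psi> n"
  have e: "e \<in> KV" "\<psi> e = n"
    using n bij unfolding e_def
    by (auto intro: the_inv_into_into f_the_inv_into_f_bij_betw simp: bij_betw_def)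
  obtain Ev Od where EvOd: "Ev \<subseteq> {e\<in>KV. n < \<psi> e}" "Od \<subseteq> {e\<in>KV. n < \<psi> e}"
    "Ev \<inter> Od = {}" "infinite Ev" "infinite Od"
    by (rule disjoint_infinite_index_sets_above)
  have "e \<notin> Ev" "insert e Ev \<inter> Od = {}" using EvOd e by auto
  have above_N: "Ev \<subseteq> {e\<in>KV. N \<le> \<psi> e}" "Od \<subseteq> {e\<in>KV. N \<le> \<psi> e}"
    "insert e Ev \<subseteq> {e\<in>KV. N \<le> \<psi> e}"
    using EvOd(1,2) e n by auto
  have sums: "infsum \<phi> (insert e Ev) = \<phi> e + infsum \<phi> Ev"
    "infsum ?w (insert e Ev) = ?w e + infsum ?w Ev"
    using EvOd(1) \<open>e \<notin> Ev\<close>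
    by (auto intro!: infsum_insert summable_on_subset[OF l1_pos_imp_summable[OF l1]]
        summable_on_subset[OF pair_weight_summable])
  have close_Ev: "\<bar>infsum \<phi> Ev / infsum ?w Ev - x\<bar> < t"
    by (rule close[OF above_N(1,2) EvOd(3-5)])
  have "\<bar>infsum \<phi> (insert e Ev) / infsum ?w (insert e Ev) - x\<bar> < t"
    using close[OF above_N(3,2) \<open>insert e Ev \<inter> Od = {}\<close> _ EvOd(5)] EvOd(4) by simp
  then have close_insert: "\<bar>(\<phi> e + infsum \<phi> Ev) / (?w e + infsum ?w Ev) - x\<bar> < t"
    unfolding sums .
  obtain e' where "e' \<in> Ev" using EvOd(4) by fastforce
  then have "0 < infsum ?w Ev" using EvOd(1) by (intro pair_weight_infsum_pos) auto
  moreover have "infsum ?w Ev \<le> ?w e"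
    using pair_weight_infsum_above[OF EvOd(1)] e by simp
  ultimately have "\<bar>\<phi> e / ?w e - x\<bar> < 3 * t"
    by (rule ratio_close_of_increment[OF close_Ev close_insert])
  moreover have "\<phi> e / ?w e = 2 ^ n * \<phi> (the_inv_into KV \<psi> n)"
    using e(2) unfolding e_def by (simp add: power_one_over)
  ultimately show ?thesis by simp
qed

lemma limit_of_has_graph_deriv:
  assumes G: "G \<in> graphs0 \<union> graphs1" and A: "symdiff G G0 \<in> graphs0 \<union> graphs1"
    and der: "has_graph_deriv \<psi> (d_phi \<phi> G0) G L"
  shows "(\<lambda>n. 2 ^ n * \<phi> (the_inv_into KV \<psi> n)) \<longlonglongrightarrow> finite_sign (symdiff G G0) * finite_sign G * L"
proof (rule LIMSEQ_I)
  fix \<epsilon> :: real assume "\<epsilon> > 0"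
  then have "\<epsilon> / 3 > 0" by simp
  obtain N where close: "\<And>D D'. D \<subseteq> {e\<in>KV. N \<le> \<psi> e} \<Longrightarrow> D' \<subseteq> {e\<in>KV. N \<le> \<psi> e} \<Longrightarrow>
      D \<inter> D' = {} \<Longrightarrow> infinite D \<Longrightarrow> infinite D' \<Longrightarrow>
      \<bar>infsum \<phi> D / infsum (pair_weight \<psi>) D - finite_sign (symdiff G G0) * finite_sign G * L\<bar> < \<epsilon> / 3"
    using infsum_ratio_close_of_has_graph_deriv[OF G A der \<open>\<epsilon> / 3 > 0\<close>] by blast
  show "\<exists>no. \<forall>n\<ge>no. norm (2 ^ n * \<phi> (the_inv_into KV \<psi> n) - finite_sign (symdiff G G0) * finite_sign G * L) < \<epsilon>"
  proof (intro exI[of _ "max N 1"] allI impI)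
    fix n assume "max N 1 \<le> n"
    from term_close_of_infsum_ratios_close[OF close this]
    show "norm (2 ^ n * \<phi> (the_inv_into KV \<psi> n) - finite_sign (symdiff G G0) * finite_sign G * L) < \<epsilon>"
      by simp
  qed
qed

lemma has_graph_deriv_d_phi_iff:
  assumes "G0 \<in> graphs0 \<union> graphs1" "symdiff G G0 \<in> graphs0 \<union> graphs1"
  shows "has_graph_deriv \<psi> (d_phi \<phi> G0) G L \<longleftrightarrow>
    (\<lambda>n. 2 ^ n * \<phi> (the_inv_into KV \<psi> n)) \<longlonglongrightarrow> finite_sign (symdiff G G0) * finite_sign G * L"
proof
  have G: "G \<in> graphs0 \<union> graphs1" by (rule graphs01_of_symdiff[OF assms(2,1)])
  show "(\<lambda>n. 2 ^ n * \<phi> (the_inv_into KV \<psi> n)) \<longlonglongrightarrow> finite_sign (symdiff G G0) * finite_sign G * L"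
    if "has_graph_deriv \<psi> (d_phi \<phi> G0) G L"
    by (rule limit_of_has_graph_deriv[OF G assms(2) that])
  show "has_graph_deriv \<psi> (d_phi \<phi> G0) G L"
    if "(\<lambda>n. 2 ^ n * \<phi> (the_inv_into KV \<psi> n)) \<longlonglongrightarrow> finite_sign (symdiff G G0) * finite_sign G * L"
    using has_graph_deriv_of_limit[OF that G assms(2)] by simp
qed

end

end

theorem proposition3p7:
  fixes \<psi> :: "'v set \<Rightarrow> nat" and \<phi> :: "'v set \<Rightarrow> real" and G0 :: "'v set set"
  assumes "countable (UNIV :: 'v set)" and "infinite (UNIV :: 'v set)"
    and "bij_betw \<psi> KV {1..}"
    and "G0 \<in> graphs0 \<union> graphs1"
    and "l1_pos \<phi>"
  defines "f \<equiv> (\<lambda>G. d_phi \<phi> G0 G)"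
  shows "((\<exists>c. (\<lambda>n. 2 ^ n * \<phi> (the_inv_into KV \<psi> n)) \<longlonglongrightarrow> c) \<longleftrightarrow>
           (\<exists>G\<in>graphs - {{}, KV}. symdiff G G0 \<in> graphs0 \<union> graphs1 \<and>
              (\<exists>L. has_graph_deriv \<psi> f G L))) \<and>
         (\<forall>c. ((\<lambda>n. 2 ^ n * \<phi> (the_inv_into KV \<psi> n)) \<longlonglongrightarrow> c) \<longrightarrow>
           (\<forall>G\<in>graphs - {{}, KV}. symdiff G G0 \<in> graphs0 \<union> graphs1 \<longrightarrow>
              (((G \<in> graphs0 \<and> symdiff G G0 \<in> graphs0) \<or> (G \<in> graphs1 \<and> symdiff G G0 \<in> graphs1))
                 \<longrightarrow> has_graph_deriv \<psi> f G c) \<and>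
              (((G \<in> graphs0 \<and> symdiff G G0 \<in> graphs1) \<or> (G \<in> graphs1 \<and> symdiff G G0 \<in> graphs0))
                 \<longrightarrow> has_graph_deriv \<psi> f G (- c))))"
proof -
  let ?a = "\<lambda>n. 2 ^ n * \<phi> (the_inv_into KV \<psi> n)"
  have KV: "infinite (KV :: 'v set set)" by (rule infinite_KV[OF assms(3)])
  have deriv_iff: "has_graph_deriv \<psi> f G L \<longleftrightarrow> ?a \<longlonglongrightarrow> finite_sign (symdiff G G0) * finite_sign G * L"
    if "symdiff G G0 \<in> graphs0 \<union> graphs1" for G L
    unfolding f_def by (rule has_graph_deriv_d_phi_iff[OF assms(3,5,4) that])
  obtain G1 where G1: "G1 \<in> graphs - {{}, KV}" "symdiff G1 G0 \<in> graphs0 \<union> graphs1"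
    by (rule exists_nontrivial_graph_symdiff_graphs01[OF KV assms(4)])
  show ?thesis
  proof (intro conjI iffI allI impI ballI)
    show "\<exists>G\<in>graphs - {{}, KV}. symdiff G G0 \<in> graphs0 \<union> graphs1 \<and> (\<exists>L. has_graph_deriv \<psi> f G L)"
      if "\<exists>c. ?a \<longlonglongrightarrow> c"
    proof -
      from that obtain c where "?a \<longlonglongrightarrow> c" ..
      then have "has_graph_deriv \<psi> f G1 (finite_sign (symdiff G1 G0) * finite_sign G1 * c)"
        using deriv_iff[OF G1(2)] by simp
      then show ?thesis using G1 by blast
    qed
    show "\<exists>c. ?a \<longlonglongrightarrow> c"
      if "\<exists>G\<in>graphs - {{}, KV}. symdiff G G0 \<in> graphs0 \<union> graphs1 \<and> (\<exists>L. has_graph_deriv \<psi> f G L)"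
      using that deriv_iff by blast
    show "has_graph_deriv \<psi> f G c" if "?a \<longlonglongrightarrow> c" "symdiff G G0 \<in> graphs0 \<union> graphs1"
      "(G \<in> graphs0 \<and> symdiff G G0 \<in> graphs0) \<or> (G \<in> graphs1 \<and> symdiff G G0 \<in> graphs1)" for c G
      using that(1) deriv_iff[OF that(2)] finite_sign_mult_same_type[OF KV that(3)] by simp
    show "has_graph_deriv \<psi> f G (- c)" if "?a \<longlonglongrightarrow> c" "symdiff G G0 \<in> graphs0 \<union> graphs1"
      "(G \<in> graphs0 \<and> symdiff G G0 \<in> graphs1) \<or> (G \<in> graphs1 \<and> symdiff G G0 \<in> graphs0)" for c G
      using that(1) deriv_iff[OF that(2)] finite_sign_mult_opposite_type[OF KV that(3)] by simp
  qed
qed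

end
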